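(* For $n\ge 2$ let $f(n)$ be the maximum of $\sigma_t(G)/\sigma(G)$ over all connected non-regular graphs $G$ of order $n$ (defined for those $n$ for which such graphs exist, i.e. $n \ge 3$). Then $f(n)\le \sqrt{1.5}\, n^{5/2}$ for all such $n$, and $f(n)=\Omega(n^{5/2})$; hence $f(n)=\Theta(n^{5/2})$. In particular, every connected graph $G$ of order $n$ satisfies $\sigma_t(G)\le \sqrt{1.5}\,n^{5/2}\,\sigma(G)$, and there exist connected graphs for which $\sigma_t(G)/\sigma(G)\ge c\,n^{5/2}$ for some absolute constant $c>0$, for all sufficiently large $n$.
   Context: For a graph $G=(V,E)$ with vertex degrees $d(\cdot)$: $\sigma(G)=\sum_{uv\in E}(d(u)-d(v))^2$ (sum over edges) and $\sigma_t(G)=\sum_{\{u,v\}\subseteq V}(d(u)-d(v))^2$ (sum over all unordered pairs of distinct vertices). A connected graph is non-regular iff $\sigma(G)>0$. *)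

theory Defs
  imports Complex_Main
begin

definition simple_graph :: "'a set \<Rightarrow> 'a set set \<Rightarrow> bool" where
  "simple_graph V E \<longleftrightarrow> finite V \<and> (\<forall>e\<in>E. e \<subseteq> V \<and> card e = 2)"

definition degree :: "'a set set \<Rightarrow> 'a \<Rightarrow> nat" where
  "degree E v = card {e\<in>E. v \<in> e}"

definition adj_rel :: "'a set set \<Rightarrow> ('a \<times> 'a) set" where
  "adj_rel E = {(u,v). {u,v} \<in> E}"

definition connected_graph :: "'a set \<Rightarrow> 'a set set \<Rightarrow> bool" where
  "connected_graph V E \<longleftrightarrow> simple_graph V E \<and> V \<noteq> {} \<and>
     (\<forall>u\<in>V. \<forall>v\<in>V. (u,v) \<in> (adj_rel E)\<^sup>*)"

definition regular_graph :: "'a set \<Rightarrow> 'a set set \<Rightarrow> bool" where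
  "regular_graph V E \<longleftrightarrow> (\<forall>u\<in>V. \<forall>v\<in>V. degree E u = degree E v)"

text \<open>sigma: sum over edges uv of (d(u)-d(v))^2; each edge {u,v} is counted twice
  as ordered pair, hence the division by 2.\<close>
definition sigma :: "'a set \<Rightarrow> 'a set set \<Rightarrow> real" where
  "sigma V E = (\<Sum>u\<in>V. \<Sum>v\<in>V. if {u,v} \<in> E
      then (real (degree E u) - real (degree E v))^2 else 0) / 2"

text \<open>sigma_t: sum over unordered pairs of distinct vertices (diagonal terms vanish).\<close>
definition sigma_t :: "'a set \<Rightarrow> 'a set set \<Rightarrow> real" where
  "sigma_t V E = (\<Sum>u\<in>V. \<Sum>v\<in>V. (real (degree E u) - real (degree E v))^2) / 2"

text \<open>f(n): maximum of sigma_t/sigma over connected non-regular graphs of order n;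
  every graph of order n is isomorphic to one on {0..<n}.\<close>
definition f_max :: "nat \<Rightarrow> real" where
  "f_max n = Max {sigma_t {0..<n} E / sigma {0..<n} E | E.
       connected_graph {0..<n} E \<and> \<not> regular_graph {0..<n} E}"

end

theory Submission
  imports Defs "HOL-Analysis.Convex"
begin

(*
  Let a and b be vertices of minimum and maximum degree and D = d(b) - d(a).
  Popoviciu's inequality gives sigma_t <= n^2 D^2 / 4. Along a shortest path from b to a the
  degrees change by integers, so D <= sigma; every vertex has at most three neighbours on a
  shortest path, so the degrees along it sum to at most 3 n; and a sequence falling from D to 0
  whose squared steps sum to at most sigma has sum at least D^3 / (8 sigma). Hence
  D^3 <= 24 n sigma, and sigma_t^2 <= n^4 D D^3 / 16 <= 1.5 n^5 sigma^2.

  Chain cliques whose sizes grow by at most one, from 3 up to K ~ sqrt n / 2, joining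
  consecutive cliques by an edge, with about n/4 vertices in cliques of size 3 and about n/3 in
  cliques of size K. Only O(K) edges join vertices of different degrees, so sigma = O(sqrt n),
  while the pairs between the two kinds of cliques give sigma_t = Omega(n^2 K^2) = Omega(n^3).
*)

lemma popoviciu_sum_sq_diff_le:
  fixes x :: "'a \<Rightarrow> real"
  assumes "finite V" and range: "\<And>u. u \<in> V \<Longrightarrow> lo \<le> x u \<and> x u \<le> hi"
  shows "(\<Sum>u\<in>V. \<Sum>v\<in>V. (x u - x v)^2) \<le> (real (card V))^2 * (hi - lo)^2 / 2"
proof -
  define w where "w u = x u - lo" for u
  define s where "s = (\<Sum>u\<in>V. w u)"
  define n where "n = real (card V)"
  have "(\<Sum>u\<in>V. \<Sum>v\<in>V. (x u - x v)^2) = (\<Sum>u\<in>V. \<Sum>v\<in>V. (w u)^2 + (w v)^2 - 2 * w u * w v)"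
    by (simp add: w_def power2_eq_square algebra_simps)
  also have "\<dots> = 2 * n * (\<Sum>u\<in>V. (w u)^2) - 2 * s^2"
    by (simp add: sum.distrib sum_subtractf sum_distrib_left sum_distrib_right power2_eq_square
        s_def n_def algebra_simps)
  also have "(\<Sum>u\<in>V. (w u)^2) \<le> (\<Sum>u\<in>V. (hi - lo) * w u)"
    using range by (intro sum_mono) (simp add: w_def power2_eq_square mult_right_mono)
  then have "2 * n * (\<Sum>u\<in>V. (w u)^2) \<le> 2 * n * ((hi - lo) * s)"
    by (intro mult_left_mono) (simp_all add: n_def s_def sum_distrib_left)
  then have "2 * n * (\<Sum>u\<in>V. (w u)^2) - 2 * s^2 \<le> 2 * n * ((hi - lo) * s) - 2 * s^2"
    by simp
  also have "\<dots> = n^2 * (hi - lo)^2 / 2 - 2 * (n * (hi - lo) / 2 - s)^2"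
    by (simp add: power2_eq_square field_simps)
  also have "\<dots> \<le> n^2 * (hi - lo)^2 / 2" by simp
  finally show ?thesis by (simp add: n_def)
qed

lemma sum_sq_diff_ge_card_mul:
  fixes x :: "'a \<Rightarrow> real"
  assumes "finite V" and "A \<subseteq> V" and "B \<subseteq> V" and "0 \<le> \<delta>"
    and gap: "\<And>u v. u \<in> A \<Longrightarrow> v \<in> B \<Longrightarrow> \<delta> \<le> x v - x u"
  shows "real (card A) * real (card B) * \<delta>^2 \<le> (\<Sum>u\<in>V. \<Sum>v\<in>V. (x u - x v)^2)"
proof -
  have "real (card A) * real (card B) * \<delta>^2 = (\<Sum>u\<in>A. \<Sum>v\<in>B. \<delta>^2)" by simp
  also have "\<dots> \<le> (\<Sum>u\<in>A. \<Sum>v\<in>B. (x u - x v)^2)"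
  proof (intro sum_mono)
    fix u v assume "u \<in> A" "v \<in> B"
    then have "\<delta>^2 \<le> (x v - x u)^2" using gap \<open>0 \<le> \<delta>\<close> by (intro power_mono) auto
    then show "\<delta>^2 \<le> (x u - x v)^2" by (simp add: power2_commute)
  qed
  also have "\<dots> \<le> (\<Sum>u\<in>A. \<Sum>v\<in>V. (x u - x v)^2)"
    using assms(1,3) by (intro sum_mono sum_mono2) auto
  also have "\<dots> \<le> (\<Sum>u\<in>V. \<Sum>v\<in>V. (x u - x v)^2)"
    using assms(1,2) by (intro sum_mono2 sum_nonneg) auto
  finally show ?thesis .
qed

lemma abs_le_power2_int: "\<bar>real_of_int k\<bar> \<le> (real_of_int k)^2"
proof -
  have "\<bar>k\<bar> \<le> k^2"
  proof (cases "k = 0")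
    case False
    then have "\<bar>k\<bar> * 1 \<le> \<bar>k\<bar> * \<bar>k\<bar>" by (intro mult_left_mono) auto
    then show ?thesis by (simp add: power2_eq_square)
  qed simp
  then show ?thesis by (metis of_int_abs of_int_le_iff of_int_power)
qed

lemma abs_diff_le_path_energy:
  fixes g :: "nat \<Rightarrow> int"
  shows "\<bar>real_of_int (g L) - g 0\<bar> \<le> (\<Sum>i<L. (real_of_int (g (Suc i)) - g i)^2)"
proof -
  have "\<bar>real_of_int (g L) - g 0\<bar> = \<bar>\<Sum>i<L. real_of_int (g (Suc i)) - g i\<bar>"
    using sum_lessThan_telescope[of "\<lambda>i. real_of_int (g i)"] by simp
  also have "\<dots> \<le> (\<Sum>i<L. \<bar>real_of_int (g (Suc i) - g i)\<bar>)" by (simp add: sum_abs)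
  also have "\<dots> \<le> (\<Sum>i<L. (real_of_int (g (Suc i)) - g i)^2)"
    by (intro sum_mono) (metis abs_le_power2_int of_int_diff)
  finally show ?thesis .
qed

lemma cube_le_energy_mul_sum:
  fixes g :: "nat \<Rightarrow> real"
  assumes nonneg: "\<forall>j\<le>L. 0 \<le> g j" and end0: "g L = 0"
  shows "(g 0)^3 \<le> 8 * (\<Sum>i<L. (g i - g (Suc i))^2) * (\<Sum>j\<le>L. g j)"
proof -
  define D where "D = g 0"
  define S where "S = (\<Sum>i<L. (g i - g (Suc i))^2)"
  have S0: "0 \<le> S" unfolding S_def by (simp add: sum_nonneg)
  have sum0: "0 \<le> (\<Sum>j\<le>L. g j)" using nonneg by (intro sum_nonneg) simp
  show ?thesis
  proof (cases "D = 0")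
    case True
    then show ?thesis using S0 sum0 by (simp add: D_def S_def)
  next
    case False
    then have D0: "0 < D" using nonneg by (simp add: D_def order_less_le)
    define m where "m = (LEAST j. g j < D / 2)"
    have gm: "g m < D / 2" unfolding m_def by (rule LeastI[of _ L]) (use end0 D0 in simp)
    have mL: "m \<le> L" unfolding m_def by (rule Least_le) (use end0 D0 in simp)
    have high: "D / 2 \<le> g j" if "j < m" for j
      using not_less_Least[of j "\<lambda>j. g j < D / 2"] that by (simp add: m_def)
    have "(D / 2)^2 < (D - g m)^2" using gm D0 by (intro power_strict_mono) auto
    also have "D - g m = (\<Sum>i<m. g i - g (Suc i))"
      using sum_lessThan_telescope'[of g m] by (simp add: D_def)
    also have "(\<Sum>i<m. g i - g (Suc i))^2 \<le> (\<Sum>i<m. (g i - g (Suc i))^2) * real m"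
      using sum_squared_le_sum_of_squares[of "\<lambda>i. g i - g (Suc i)" "{..<m}"] by simp
    also have "\<dots> \<le> S * real m"
      unfolding S_def by (intro mult_right_mono sum_mono2) (use mL in auto)
    finally have D2: "D^2 < 4 * S * real m" by (simp add: power_divide)
    have "real m * (D / 2) = (\<Sum>j<m. D / 2)" by simp
    also have "\<dots> \<le> (\<Sum>j<m. g j)" using high by (intro sum_mono) simp
    also have "\<dots> \<le> (\<Sum>j\<le>L. g j)" using mL nonneg by (intro sum_mono2) auto
    finally have area: "real m * (D / 2) \<le> (\<Sum>j\<le>L. g j)" .
    have "D^3 = D * D^2" by (simp add: power3_eq_cube power2_eq_square)
    also have "\<dots> \<le> D * (4 * S * real m)" using D2 D0 by (intro mult_left_mono) auto
    also have "\<dots> = 8 * S * (real m * (D / 2))" by (simp add: algebra_simps)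
    also have "\<dots> \<le> 8 * S * (\<Sum>j\<le>L. g j)" using area S0 by (intro mult_left_mono) auto
    finally show ?thesis by (simp add: D_def S_def)
  qed
qed

lemma power2_diff_le_1:
  fixes a b :: nat
  assumes "a \<le> Suc b" and "b \<le> Suc a"
  shows "(real a - real b)^2 \<le> 1"
proof -
  consider "a = b" | "a = Suc b" | "b = Suc a" using assms by linarith
  then show ?thesis by cases auto
qed

lemma powr_five_halves:
  fixes x :: real
  assumes "0 \<le> x"
  shows "x powr (5/2) = x * x * sqrt x"
proof -
  have "x powr (5/2) = x powr 2 * x powr (1/2)" by (simp flip: powr_add)
  also have "\<dots> = x * x * sqrt x"
    using assms by (cases "x = 0") (simp_all add: powr_numeral powr_half_sqrt power2_eq_square)
  finally show ?thesis .
qed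

lemma card_steps_le:
  fixes s :: "nat \<Rightarrow> nat"
  assumes "\<forall>i<k. s i \<le> s (Suc i)"
  shows "card {i. i < k \<and> s i \<noteq> s (Suc i)} + s 0 \<le> s k"
  using assms
proof (induction k)
  case (Suc k)
  have "{i. i < Suc k \<and> s i \<noteq> s (Suc i)}
      = {i. i < k \<and> s i \<noteq> s (Suc i)} \<union> (if s k \<noteq> s (Suc k) then {k} else {})"
    by (auto simp: less_Suc_eq)
  then have "card {i. i < Suc k \<and> s i \<noteq> s (Suc i)}
      \<le> card {i. i < k \<and> s i \<noteq> s (Suc i)} + card (if s k \<noteq> s (Suc k) then {k} else {})"
    by (simp only: card_Un_le)
  then show ?case using Suc by (auto split: if_splits)
qed simp

lemma sum_lessThan_add: "(\<Sum>i<x + y. f i) = (\<Sum>i<x. f i) + (\<Sum>i<y. f (x + i))"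
  for f :: "nat \<Rightarrow> 'a::comm_monoid_add"
  by (induction y) (simp_all add: add.assoc)

lemma card_ordered_pairs_le:
  assumes "finite A" and "\<forall>e\<in>F. card e = 2" and "finite F"
  shows "card {p \<in> A \<times> A. {fst p, snd p} \<in> F} \<le> 2 * card F"
proof -
  have pairs: "{(u, v). {u, v} = e} = {(x, y), (y, x)}" if "e = {x, y}" "x \<noteq> y" for e x y
    using that by (auto simp: doubleton_eq_iff)
  have two: "card {(u, v). {u, v} = e} \<le> 2" if "e \<in> F" for e
  proof -
    obtain x y where "e = {x, y}" "x \<noteq> y" using assms(2) \<open>e \<in> F\<close> by (meson card_2_iff)
    then show ?thesis by (simp add: pairs card_insert_if)
  qed
  have "card {p \<in> A \<times> A. {fst p, snd p} \<in> F} \<le> card (\<Union>e\<in>F. {(u, v). {u, v} = e})"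
  proof (rule card_mono)
    show "finite (\<Union>e\<in>F. {(u, v). {u, v} = e})"
      using assms(2,3) by (auto simp: card_2_iff pairs)
  qed auto
  also have "\<dots> \<le> (\<Sum>e\<in>F. card {(u, v). {u, v} = e})" using assms(3) by (rule card_UN_le)
  also have "\<dots> \<le> (\<Sum>e\<in>F. 2)" using two by (rule sum_mono)
  finally show ?thesis by simp
qed

section \<open>Shortest paths\<close>

definition shortest_path :: "('a \<times> 'a) set \<Rightarrow> (nat \<Rightarrow> 'a) \<Rightarrow> nat \<Rightarrow> bool" where
  "shortest_path R y L \<longleftrightarrow>
     (\<forall>i<L. (y i, y (Suc i)) \<in> R) \<and> (\<forall>n. (y 0, y L) \<in> R ^^ n \<longrightarrow> L \<le> n)"

lemma shortest_path_exists:
  assumes "(a, b) \<in> R\<^sup>*"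
  obtains y L where "shortest_path R y L" "y 0 = a" "y L = b"
proof -
  define L where "L = (LEAST n. (a, b) \<in> R ^^ n)"
  have "(a, b) \<in> R ^^ L"
    unfolding L_def by (rule LeastI_ex) (use assms rtrancl_power in blast)
  then obtain y where "y 0 = a" "y L = b" "\<forall>i<L. (y i, y (Suc i)) \<in> R"
    by (auto simp: relpow_fun_conv)
  moreover have "L \<le> n" if "(a, b) \<in> R ^^ n" for n
    unfolding L_def using that by (rule Least_le)
  ultimately show ?thesis using that by (auto simp: shortest_path_def)
qed

lemma path_segment_relpow:
  assumes "\<forall>i<L. (y i, y (Suc i)) \<in> R" and "i \<le> k" and "k \<le> L"
  shows "(y i, y k) \<in> R ^^ (k - i)"
  unfolding relpow_fun_conv
  by (rule exI[of _ "\<lambda>j. y (i + j)"]) (use assms in auto)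

lemma shortest_path_shortcut:
  assumes "shortest_path R y L" and "i \<le> k" and "k \<le> L" and "(y i, y k) \<in> R ^^ l"
  shows "k - i \<le> l"
proof -
  have path: "\<forall>i<L. (y i, y (Suc i)) \<in> R" using assms(1) by (simp add: shortest_path_def)
  have "(y 0, y i) \<in> R ^^ i" using path_segment_relpow[OF path, of 0 i] assms by simp
  moreover have "(y k, y L) \<in> R ^^ (L - k)"
    using path_segment_relpow[OF path, of k L] assms by simp
  ultimately have "(y 0, y L) \<in> R ^^ (i + l + (L - k))"
    using assms(4) by (auto simp: relpow_add)
  then have "L \<le> i + l + (L - k)" using assms(1) by (simp add: shortest_path_def)
  then show ?thesis using assms(2,3) by linarith
qed

lemma shortest_path_inj:
  assumes "shortest_path R y L"
  shows "inj_on y {..L}"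
proof (rule linorder_inj_onI')
  fix i k assume "i \<in> {..L}" "k \<in> {..L}" "i < k"
  then show "y i \<noteq> y k" using shortest_path_shortcut[OF assms, of i k 0] by auto
qed

lemma shortest_path_common_neighbour:
  assumes "shortest_path R y L" and "i \<le> k" and "k \<le> L" and "(y i, v) \<in> R" and "(v, y k) \<in> R"
  shows "k \<le> i + 2"
proof -
  have "(y i, y k) \<in> R ^^ 2" using assms(4,5) by (auto simp: numeral_2_eq_2 relcomp.relcompI)
  then show ?thesis using shortest_path_shortcut[OF assms(1-3)] by fastforce
qed

section \<open>Degrees, sigma and sigma_t\<close>

lemma simple_graph_edge_subset: "simple_graph V E \<Longrightarrow> e \<in> E \<Longrightarrow> e \<subseteq> V"
  by (simp add: simple_graph_def)

lemma sym_adj_rel: "sym (adj_rel E)"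
  by (auto simp: adj_rel_def sym_def insert_commute)

lemma degree_eq_card_neighbours:
  assumes "simple_graph V E"
  shows "degree E w = card {v\<in>V. {w, v} \<in> E}"
proof -
  have edge: "e \<subseteq> V \<and> card e = 2" if "e \<in> E" for e
    using assms that by (auto simp: simple_graph_def)
  have "{e\<in>E. w \<in> e} = (\<lambda>v. {w, v}) ` {v\<in>V. {w, v} \<in> E}"
  proof (intro equalityI subsetI)
    fix e assume e: "e \<in> {e\<in>E. w \<in> e}"
    then obtain x y where "e = {x, y}" using edge[of e] by (auto simp: card_2_iff)
    with e edge[of e] show "e \<in> (\<lambda>v. {w, v}) ` {v\<in>V. {w, v} \<in> E}"
      by (auto simp: insert_commute)
  qed auto
  moreover have "inj_on (\<lambda>v. {w, v}) {v\<in>V. {w, v} \<in> E}"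
  proof (rule inj_onI)
    fix u v assume "u \<in> {v\<in>V. {w, v} \<in> E}" and "{w, u} = {w, v}"
    moreover from this have "u \<noteq> w" using edge[of "{w, u}"] by auto
    ultimately show "u = v" by (auto simp: doubleton_eq_iff)
  qed
  ultimately show ?thesis unfolding degree_def by (simp add: card_image)
qed

lemma sigma_nonneg: "0 \<le> sigma V E"
  unfolding sigma_def by (intro divide_nonneg_nonneg sum_nonneg) auto

lemma sigma_t_nonneg: "0 \<le> sigma_t V E"
  unfolding sigma_t_def by (intro divide_nonneg_nonneg sum_nonneg) auto

lemma sigma_t_regular:
  assumes "regular_graph V E"
  shows "sigma_t V E = 0"
proof -
  have "(real (degree E u) - real (degree E v))^2 = 0" if "u \<in> V" "v \<in> V" for u v
  proof -
    have "degree E u = degree E v" using assms that unfolding regular_graph_def by blast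
    then show ?thesis by simp
  qed
  then have "(\<Sum>u\<in>V. \<Sum>v\<in>V. (real (degree E u) - real (degree E v))^2) = 0"
    by (intro sum.neutral ballI)
  then show ?thesis by (simp add: sigma_t_def)
qed

lemma sigma_le_card_edges:
  assumes graph: "simple_graph V E" and "F \<subseteq> E"
    and diff: "\<And>u v. {u, v} \<in> E \<Longrightarrow>
      (real (degree E u) - real (degree E v))^2 \<le> (if {u, v} \<in> F then 1 else 0)"
  shows "sigma V E \<le> card F"
proof -
  have "finite V" and "E \<subseteq> Pow V" and card2: "\<forall>e\<in>F. card e = 2"
    using graph \<open>F \<subseteq> E\<close> by (auto simp: simple_graph_def)
  then have "finite F" using \<open>F \<subseteq> E\<close> by (meson finite_Pow_iff finite_subset)
  have "(if {u, v} \<in> E then (real (degree E u) - real (degree E v))^2 else 0)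
      \<le> (if {u, v} \<in> F then 1 else 0)" for u v
    using diff[of u v] by (cases "{u, v} \<in> E") simp_all
  then have "sigma V E \<le> (\<Sum>u\<in>V. \<Sum>v\<in>V. if {u, v} \<in> F then 1 else 0) / 2"
    unfolding sigma_def by (intro divide_right_mono sum_mono) auto
  also have "(\<Sum>u\<in>V. \<Sum>v\<in>V. if {u, v} \<in> F then 1 else 0 :: real)
      = real (card {p \<in> V \<times> V. {fst p, snd p} \<in> F})"
  proof -
    have "{p \<in> V \<times> V. {fst p, snd p} \<in> F} = (SIGMA u:V. {v \<in> V. {u, v} \<in> F})" by auto
    moreover have "(\<Sum>v\<in>V. if {u, v} \<in> F then 1 else 0 :: real) = real (card {v \<in> V. {u, v} \<in> F})"
      for u using \<open>finite V\<close> by (simp add: sum.If_cases Int_def)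
    ultimately show ?thesis using \<open>finite V\<close> by (simp add: card_SigmaI)
  qed
  also have "\<dots> \<le> 2 * real (card F)"
    using card_ordered_pairs_le[OF \<open>finite V\<close> card2 \<open>finite F\<close>] by linarith
  finally show ?thesis by simp
qed

section \<open>The upper bound\<close>

lemma card_shortest_path_neighbours_le_3:
  assumes "shortest_path (adj_rel E) y L"
  shows "card {j. j \<le> L \<and> {y j, v} \<in> E} \<le> 3"
proof (cases "{j. j \<le> L \<and> {y j, v} \<in> E} = {}")
  case True
  then show ?thesis by (simp only: card.empty)
next
  case False
  let ?J = "{j. j \<le> L \<and> {y j, v} \<in> E}"
  have fin: "finite ?J" by (rule finite_subset[of _ "{..L}"]) auto
  define i where "i = Min ?J"
  have i: "i \<in> ?J" unfolding i_def using fin False by (rule Min_in)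
  have "?J \<subseteq> {i, Suc i, Suc (Suc i)}"
  proof
    fix k assume k: "k \<in> ?J"
    have "i \<le> k" unfolding i_def using fin k by simp
    moreover have "k \<le> i + 2"
      using shortest_path_common_neighbour[OF assms \<open>i \<le> k\<close>, of v] i k
      by (auto simp: adj_rel_def insert_commute)
    ultimately show "k \<in> {i, Suc i, Suc (Suc i)}" by auto
  qed
  then have "card ?J \<le> card {i, Suc i, Suc (Suc i)}" by (rule card_mono[rotated]) simp
  then show ?thesis by simp
qed

lemma sum_degree_path_le:
  fixes y :: "nat \<Rightarrow> 'a"
  assumes "simple_graph V E" and "\<And>v. card {j. j \<le> L \<and> {y j, v} \<in> E} \<le> k"
  shows "(\<Sum>j\<le>L. degree E (y j)) \<le> k * card V"
proof -
  have finV: "finite V" using assms(1) by (simp add: simple_graph_def)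
  have "(\<Sum>j\<le>L. degree E (y j)) = (\<Sum>j\<le>L. \<Sum>v\<in>V. if {y j, v} \<in> E then 1 else 0)"
    using finV by (simp add: degree_eq_card_neighbours[OF assms(1)] sum.If_cases Int_def)
  also have "\<dots> = (\<Sum>v\<in>V. \<Sum>j\<le>L. if {y j, v} \<in> E then 1 else 0)" by (rule sum.swap)
  also have "\<dots> = (\<Sum>v\<in>V. card {j. j \<le> L \<and> {y j, v} \<in> E})"
  proof -
    have "(\<Sum>j\<le>L. if P j then 1 else 0 :: nat) = card {j. j \<le> L \<and> P j}" for P
      by (simp add: sum.If_cases Int_def atMost_def)
    then show ?thesis by simp
  qed
  also have "\<dots> \<le> (\<Sum>v\<in>V. k)" by (intro sum_mono assms(2))
  finally show ?thesis by (simp add: mult.commute)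
qed

lemma injective_path_energy_le_sigma:
  assumes "simple_graph V E" and path: "\<forall>i<L. {y i, y (Suc i)} \<in> E" and inj: "inj_on y {..L}"
  shows "(\<Sum>i<L. (real (degree E (y i)) - real (degree E (y (Suc i))))^2) \<le> sigma V E"
proof -
  define f where
    "f = (\<lambda>(u, v). if {u, v} \<in> E then (real (degree E u) - real (degree E v))^2 else 0)"
  define fwd where "fwd = (\<lambda>i. (y i, y (Suc i))) ` {..<L}"
  define bwd where "bwd = (\<lambda>i. (y (Suc i), y i)) ` {..<L}"
  have inj_fwd: "inj_on (\<lambda>i. (y i, y (Suc i))) {..<L}"
    and inj_bwd: "inj_on (\<lambda>i. (y (Suc i), y i)) {..<L}"
    using inj by (auto simp: inj_on_def)
  have "fwd \<inter> bwd = {}"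
  proof (rule ccontr)
    assume "fwd \<inter> bwd \<noteq> {}"
    then obtain i j where "i < L" "j < L" "y i = y (Suc j)" "y (Suc i) = y j"
      unfolding fwd_def bwd_def by auto
    then have "i = Suc j" "Suc i = j" using inj by (auto dest: inj_onD)
    then show False by simp
  qed
  then have "(\<Sum>p\<in>fwd. f p) + (\<Sum>p\<in>bwd. f p) = (\<Sum>p\<in>fwd \<union> bwd. f p)"
    by (simp add: sum.union_disjoint fwd_def bwd_def)
  also have "\<dots> \<le> (\<Sum>p\<in>V \<times> V. f p)"
  proof (rule sum_mono2)
    show "finite (V \<times> V)" using assms(1) by (simp add: simple_graph_def)
    show "fwd \<union> bwd \<subseteq> V \<times> V"
      using assms(1) path by (fastforce simp: fwd_def bwd_def simple_graph_def)
  qed (simp add: f_def case_prod_beta)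
  finally have "(\<Sum>p\<in>fwd. f p) + (\<Sum>p\<in>bwd. f p) \<le> (\<Sum>p\<in>V \<times> V. f p)" .
  moreover have "(\<Sum>p\<in>fwd. f p) = (\<Sum>i<L. (real (degree E (y i)) - real (degree E (y (Suc i))))^2)"
    "(\<Sum>p\<in>bwd. f p) = (\<Sum>i<L. (real (degree E (y i)) - real (degree E (y (Suc i))))^2)"
    using path by (simp_all add: fwd_def bwd_def sum.reindex inj_fwd inj_bwd f_def
        insert_commute power2_commute)
  moreover have "sigma V E = (\<Sum>p\<in>V \<times> V. f p) / 2"
    by (simp add: sigma_def f_def sum.cartesian_product)
  ultimately show ?thesis by linarith
qed

lemma connected_graph_short_path:
  assumes "connected_graph V E" and "a \<in> V" and "b \<in> V"
  obtains y L where "y 0 = b" "y L = a" "\<forall>j\<le>L. y j \<in> V"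
    "(\<Sum>i<L. (real (degree E (y i)) - real (degree E (y (Suc i))))^2) \<le> sigma V E"
    "(\<Sum>j\<le>L. degree E (y j)) \<le> 3 * card V"
proof -
  have graph: "simple_graph V E" using assms(1) by (simp add: connected_graph_def)
  have "(b, a) \<in> (adj_rel E)\<^sup>*" using assms by (simp add: connected_graph_def)
  then obtain y L where shortest: "shortest_path (adj_rel E) y L" and "y 0 = b" "y L = a"
    by (rule shortest_path_exists)
  have path: "\<forall>i<L. {y i, y (Suc i)} \<in> E"
    using shortest by (simp add: shortest_path_def adj_rel_def)
  have "y j \<in> V" if "j \<le> L" for j
  proof (cases j)
    case (Suc i)
    then have "{y i, y j} \<in> E" using path that by auto
    then show ?thesis using graph by (auto simp: simple_graph_def)
  qed (use \<open>y 0 = b\<close> assms(3) in simp)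
  moreover have "(\<Sum>i<L. (real (degree E (y i)) - real (degree E (y (Suc i))))^2) \<le> sigma V E"
    using graph path shortest_path_inj[OF shortest] by (rule injective_path_energy_le_sigma)
  moreover have "(\<Sum>j\<le>L. degree E (y j)) \<le> 3 * card V"
    using graph card_shortest_path_neighbours_le_3[OF shortest] by (rule sum_degree_path_le)
  ultimately show ?thesis using that \<open>y 0 = b\<close> \<open>y L = a\<close> by blast
qed

lemma degree_gap_bounds:
  assumes "connected_graph V E" and "a \<in> V" and "b \<in> V"
    and min: "\<And>u. u \<in> V \<Longrightarrow> degree E a \<le> degree E u"
  defines "D \<equiv> real (degree E b) - real (degree E a)"
  shows "D \<le> sigma V E" and "D^3 \<le> 24 * real (card V) * sigma V E"
proof -
  obtain y L where ends: "y 0 = b" "y L = a" and inV: "\<forall>j\<le>L. y j \<in> V"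
    and energy: "(\<Sum>i<L. (real (degree E (y i)) - real (degree E (y (Suc i))))^2) \<le> sigma V E"
    and degrees: "(\<Sum>j\<le>L. degree E (y j)) \<le> 3 * card V"
    using connected_graph_short_path[OF assms(1-3)] .
  have "\<bar>real (degree E a) - real (degree E b)\<bar>
      \<le> (\<Sum>i<L. (real (degree E (y (Suc i))) - real (degree E (y i)))^2)"
    using abs_diff_le_path_energy[of "\<lambda>j. int (degree E (y j))" L] ends by simp
  then show "D \<le> sigma V E"
    using energy by (simp add: D_def power2_commute)
  define g where "g j = real (degree E (y j)) - real (degree E a)" for j
  have g_nonneg: "0 \<le> g j" if "j \<le> L" for j using inV min that by (simp add: g_def)
  have "D^3 = (g 0)^3" using ends by (simp add: g_def D_def)
  also have "\<dots> \<le> 8 * (\<Sum>i<L. (g i - g (Suc i))^2) * (\<Sum>j\<le>L. g j)"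
    by (rule cube_le_energy_mul_sum) (use g_nonneg ends in \<open>simp_all add: g_def\<close>)
  also have "\<dots> \<le> 8 * sigma V E * (3 * real (card V))"
  proof (intro mult_mono mult_left_mono)
    show "(\<Sum>i<L. (g i - g (Suc i))^2) \<le> sigma V E" using energy by (simp add: g_def)
    have "(\<Sum>j\<le>L. g j) \<le> (\<Sum>j\<le>L. real (degree E (y j)))" by (intro sum_mono) (simp add: g_def)
    also have "\<dots> \<le> 3 * real (card V)" using degrees by (simp flip: of_nat_sum)
    finally show "(\<Sum>j\<le>L. g j) \<le> 3 * real (card V)" .
    show "0 \<le> (\<Sum>j\<le>L. g j)" using g_nonneg by (intro sum_nonneg) simp
  qed (simp_all add: sigma_nonneg sum_nonneg)
  also have "\<dots> = 24 * real (card V) * sigma V E" by simp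
  finally show "D^3 \<le> 24 * real (card V) * sigma V E" .
qed

theorem sigma_t_le_sigma:
  assumes "connected_graph V E"
  shows "sigma_t V E \<le> sqrt 1.5 * real (card V) powr (5/2) * sigma V E"
proof -
  have "finite V" and "V \<noteq> {}" using assms by (auto simp: connected_graph_def simple_graph_def)
  obtain a where a: "a \<in> V" "\<And>u. u \<in> V \<Longrightarrow> degree E a \<le> degree E u"
    using ex_has_least_nat[of "\<lambda>u. u \<in> V" _ "degree E"] \<open>V \<noteq> {}\<close> by blast
  have "Max (degree E ` V) \<in> degree E ` V" using \<open>finite V\<close> \<open>V \<noteq> {}\<close> by simp
  then obtain b where "b \<in> V" "degree E b = Max (degree E ` V)" by (metis imageE)
  then have b: "b \<in> V" "\<And>u. u \<in> V \<Longrightarrow> degree E u \<le> degree E b"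
    using \<open>finite V\<close> by simp_all
  define n where "n = real (card V)"
  define D where "D = real (degree E b) - real (degree E a)"
  define S where "S = sigma V E"
  have n: "0 < n" using \<open>finite V\<close> \<open>V \<noteq> {}\<close> by (simp add: n_def card_gt_0_iff)
  have D: "0 \<le> D" using a(2)[OF b(1)] by (simp add: D_def)
  have S: "0 \<le> S" by (simp add: S_def sigma_nonneg)
  have DS: "D \<le> S" and D3: "D^3 \<le> 24 * n * S"
    using degree_gap_bounds[OF assms a(1) b(1) a(2)] by (simp_all add: D_def S_def n_def)
  have "sigma_t V E \<le> n^2 * D^2 / 4"
    using popoviciu_sum_sq_diff_le[OF \<open>finite V\<close>, where x = "\<lambda>u. real (degree E u)"
        and lo = "degree E a" and hi = "degree E b"] a b by (simp add: sigma_t_def n_def D_def)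
  also have "\<dots> \<le> sqrt 1.5 * n powr (5/2) * S"
  proof (rule power2_le_imp_le)
    have "(n^2 * D^2 / 4)^2 = n^4 * (D * D^3) / 16"
      by (simp add: field_simps eval_nat_numeral)
    also have "\<dots> \<le> n^4 * (S * (24 * n * S)) / 16"
      using D DS D3 S by (intro divide_right_mono mult_left_mono mult_mono) auto
    also have "\<dots> = (sqrt 1.5)^2 * (n^2 * n^2 * (sqrt n)^2) * S^2"
      using n by (simp add: field_simps eval_nat_numeral)
    also have "\<dots> = (sqrt 1.5 * n powr (5/2) * S)^2"
      using n by (simp add: powr_five_halves power_mult_distrib)
    finally show "(n^2 * D^2 / 4)^2 \<le> (sqrt 1.5 * n powr (5/2) * S)^2" .
  qed (simp add: S)
  finally show ?thesis by (simp add: n_def S_def)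
qed

lemma ratio_le_sqrt_bound:
  assumes "connected_graph V E"
  shows "sigma_t V E / sigma V E \<le> sqrt 1.5 * real (card V) powr (5/2)"
proof (cases "sigma V E = 0")
  case False
  then have "0 < sigma V E" using sigma_nonneg[of V E] by simp
  then show ?thesis using sigma_t_le_sigma[OF assms] by (simp add: pos_divide_le_eq)
qed simp

lemma sigma_t_div_le_ratio:
  assumes "connected_graph V E" and "sigma V E \<le> B"
  shows "sigma_t V E / B \<le> sigma_t V E / sigma V E"
proof (cases "sigma V E = 0")
  case True
  then have "sigma_t V E = 0"
    using sigma_t_le_sigma[OF assms(1)] sigma_t_nonneg[of V E] by simp
  then show ?thesis by simp
next
  case False
  then have "0 < sigma V E" using sigma_nonneg[of V E] by simp
  then show ?thesis using assms(2) sigma_t_nonneg[of V E] by (intro divide_left_mono) auto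
qed

section \<open>Relabelling vertices\<close>

context
  fixes h :: "'a \<Rightarrow> 'b" and V :: "'a set" and W :: "'b set"
  assumes bij: "bij_betw h V W"
begin

lemma sum_sum_relabel:
  "(\<Sum>w\<in>W. \<Sum>w'\<in>W. g w w') = (\<Sum>u\<in>V. \<Sum>v\<in>V. g (h u) (h v))"
proof -
  have "(\<Sum>w\<in>W. \<Sum>w'\<in>W. g w w') = (\<Sum>u\<in>V. \<Sum>w'\<in>W. g (h u) w')"
    by (rule sum.reindex_bij_betw[OF bij, symmetric])
  also have "\<dots> = (\<Sum>u\<in>V. \<Sum>v\<in>V. g (h u) (h v))"
    by (rule sum.cong[OF refl], rule sum.reindex_bij_betw[OF bij, symmetric])
  finally show ?thesis .
qed

context
  fixes E :: "'a set set"
  assumes graph: "simple_graph V E"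
begin

lemma relabel_mem_iff: "e \<in> E \<Longrightarrow> u \<in> V \<Longrightarrow> h u \<in> h ` e \<longleftrightarrow> u \<in> e"
  using inj_on_image_mem_iff[OF bij_betw_imp_inj_on[OF bij] _ simple_graph_edge_subset[OF graph]]
  by blast

lemma inj_on_relabel_edges: "inj_on ((`) h) E"
  using bij simple_graph_edge_subset[OF graph]
  by (auto simp: bij_betw_def inj_on_def inj_on_image_eq_iff)

lemma relabel_edge_iff:
  assumes "u \<in> V" and "v \<in> V"
  shows "{h u, h v} \<in> (`) h ` E \<longleftrightarrow> {u, v} \<in> E"
proof -
  have "{h u, h v} = h ` e \<longleftrightarrow> {u, v} = e" if "e \<in> E" for e
    using inj_on_image_eq_iff[OF bij_betw_imp_inj_on[OF bij], of "{u, v}" e]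
      assms simple_graph_edge_subset[OF graph that]
    by simp
  then show ?thesis unfolding image_iff by blast
qed

lemma simple_graph_relabel: "simple_graph W ((`) h ` E)"
  unfolding simple_graph_def
proof (intro conjI ballI)
  show "finite W" using bij graph by (auto simp: bij_betw_def simple_graph_def)
  fix e' assume "e' \<in> (`) h ` E"
  then obtain e where e: "e \<in> E" "e' = h ` e" by blast
  then have "card e' = card e"
    using card_image[OF inj_on_subset[OF bij_betw_imp_inj_on[OF bij]
          simple_graph_edge_subset[OF graph]]]
    by simp
  then show "e' \<subseteq> W" "card e' = 2"
    using e graph bij_betw_imp_surj_on[OF bij] simple_graph_edge_subset[OF graph]
    by (auto simp: simple_graph_def)
qed

lemma degree_relabel:
  assumes "u \<in> V"
  shows "degree ((`) h ` E) (h u) = degree E u"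
proof -
  have "{e' \<in> (`) h ` E. h u \<in> e'} = (`) h ` {e \<in> E. u \<in> e}"
    using relabel_mem_iff[OF _ assms] by auto
  then show ?thesis
    unfolding degree_def using inj_on_relabel_edges by (simp add: card_image inj_on_subset)
qed

lemma sigma_relabel: "sigma W ((`) h ` E) = sigma V E"
  unfolding sigma_def sum_sum_relabel
  by (intro arg_cong[where f = "\<lambda>x. x / 2"] sum.cong refl)
    (simp add: relabel_edge_iff degree_relabel)

lemma sigma_t_relabel: "sigma_t W ((`) h ` E) = sigma_t V E"
  unfolding sigma_t_def sum_sum_relabel by (simp add: degree_relabel)

lemma regular_graph_relabel_iff: "regular_graph W ((`) h ` E) \<longleftrightarrow> regular_graph V E"
proof -
  have "regular_graph W ((`) h ` E)
      \<longleftrightarrow> (\<forall>u\<in>V. \<forall>v\<in>V. degree ((`) h ` E) (h u) = degree ((`) h ` E) (h v))"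
    unfolding regular_graph_def bij_betw_imp_surj_on[OF bij, symmetric] by simp
  then show ?thesis by (simp add: regular_graph_def degree_relabel)
qed

lemma connected_graph_relabel:
  assumes "connected_graph V E"
  shows "connected_graph W ((`) h ` E)"
proof -
  have "(h u, h v) \<in> (adj_rel ((`) h ` E))\<^sup>*" if "(u, v) \<in> (adj_rel E)\<^sup>*" for u v
    using that
  proof (induction rule: rtrancl_induct)
    case (step v w)
    then have "(h v, h w) \<in> adj_rel ((`) h ` E)"
      by (auto simp: adj_rel_def intro: image_eqI[where x = "{v, w}"])
    with step.IH show ?case by simp
  qed simp
  moreover have "W \<noteq> {}"
    using assms bij_betw_imp_surj_on[OF bij] by (auto simp: connected_graph_def)
  ultimately show ?thesis
    using assms simple_graph_relabel bij_betw_imp_surj_on[OF bij]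
    unfolding connected_graph_def by blast
qed

end

end

lemma connected_nonregular_on_nat:
  assumes "connected_graph V E" and "\<not> regular_graph V E"
  obtains E' where "connected_graph {0..<card V} E'" "\<not> regular_graph {0..<card V} E'"
    "sigma {0..<card V} E' = sigma V E" "sigma_t {0..<card V} E' = sigma_t V E"
proof -
  have graph: "simple_graph V E" using assms(1) by (simp add: connected_graph_def)
  then have "finite V" by (simp add: simple_graph_def)
  then obtain h where h: "bij_betw h V {0..<card V}" using ex_bij_betw_finite_nat by blast
  show ?thesis
  proof (rule that)
    show "connected_graph {0..<card V} ((`) h ` E)"
      by (rule connected_graph_relabel[OF h graph assms(1)])
    show "\<not> regular_graph {0..<card V} ((`) h ` E)"
      using assms(2) regular_graph_relabel_iff[OF h graph] by simp
  qed (simp_all add: sigma_relabel[OF h graph] sigma_t_relabel[OF h graph])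
qed

lemma finite_f_max_set:
  fixes n :: nat
  shows "finite {sigma_t {0..<n} E / sigma {0..<n} E | E.
     connected_graph {0..<n} E \<and> \<not> regular_graph {0..<n} E}"
proof -
  have "{E. connected_graph {0..<n} E \<and> \<not> regular_graph {0..<n} E} \<subseteq> Pow (Pow {0..<n})"
    by (auto simp: connected_graph_def simple_graph_def)
  then have "finite {E. connected_graph {0..<n} E \<and> \<not> regular_graph {0..<n} E}"
    by (rule finite_subset) simp
  then show ?thesis by (simp add: setcompr_eq_image)
qed

lemma ratio_le_f_max:
  assumes "connected_graph V E" and "\<not> regular_graph V E"
  shows "sigma_t V E / sigma V E \<le> f_max (card V)"
proof -
  obtain E' where "connected_graph {0..<card V} E'" "\<not> regular_graph {0..<card V} E'"
    "sigma {0..<card V} E' = sigma V E" "sigma_t {0..<card V} E' = sigma_t V E"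
    using connected_nonregular_on_nat[OF assms] .
  then show ?thesis unfolding f_max_def by (intro Max_ge[OF finite_f_max_set]) force
qed

lemma f_max_le:
  assumes "connected_graph V E\<^sub>0" and "\<not> regular_graph V E\<^sub>0"
    and bound: "\<And>E. connected_graph {0..<card V} E \<Longrightarrow> \<not> regular_graph {0..<card V} E \<Longrightarrow>
      sigma_t {0..<card V} E / sigma {0..<card V} E \<le> B"
  shows "f_max (card V) \<le> B"
proof -
  obtain E' where "connected_graph {0..<card V} E'" "\<not> regular_graph {0..<card V} E'"
    using connected_nonregular_on_nat[OF assms(1,2)] by metis
  then show ?thesis
    unfolding f_max_def by (intro Max.boundedI[OF finite_f_max_set]) (auto intro: bound)
qed

section \<open>Chains of cliques\<close>

definition chain_vertices :: "nat \<Rightarrow> (nat \<Rightarrow> nat) \<Rightarrow> (nat \<times> nat) set" where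
  "chain_vertices m s = (SIGMA i:{..<m}. {..<s i})"

text \<open>Removing the edge between the first and the last vertex of every block compensates for the
  links between consecutive blocks: all vertices of block \<open>i\<close> get degree \<open>s i - 1\<close>, except the
  two ends of the chain.\<close>

fun chain_adj :: "nat \<Rightarrow> (nat \<Rightarrow> nat) \<Rightarrow> nat \<times> nat \<Rightarrow> nat \<times> nat \<Rightarrow> bool" where
  "chain_adj m s (i, p) (j, q) \<longleftrightarrow>
     i = j \<and> i < m \<and> p < s i \<and> q < s i \<and> p \<noteq> q \<and> {p, q} \<noteq> {0, s i - 1}
     \<or> j = Suc i \<and> j < m \<and> p = s i - 1 \<and> q = 0
     \<or> i = Suc j \<and> i < m \<and> p = 0 \<and> q = s j - 1"

definition chain_edges :: "nat \<Rightarrow> (nat \<Rightarrow> nat) \<Rightarrow> (nat \<times> nat) set set" where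
  "chain_edges m s = {{u, v} | u v. chain_adj m s u v}"

definition staircase :: "nat \<Rightarrow> (nat \<Rightarrow> nat) \<Rightarrow> bool" where
  "staircase m s \<longleftrightarrow>
     (\<forall>i<m. 3 \<le> s i) \<and> (\<forall>i. Suc i < m \<longrightarrow> s i \<le> s (Suc i) \<and> s (Suc i) \<le> Suc (s i))"

lemma chain_adj_sym: "chain_adj m s u v \<longleftrightarrow> chain_adj m s v u"
  by (cases u; cases v) (auto simp: doubleton_eq_iff)

lemma chain_edges_iff: "{u, v} \<in> chain_edges m s \<longleftrightarrow> chain_adj m s u v"
proof
  assume "{u, v} \<in> chain_edges m s"
  then obtain u' v' where "{u, v} = {u', v'}" "chain_adj m s u' v'"
    unfolding chain_edges_def by blast
  then show "chain_adj m s u v" by (metis doubleton_eq_iff chain_adj_sym)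
qed (unfold chain_edges_def, blast)

lemma chain_adj_vertices:
  assumes "staircase m s" and "chain_adj m s u v"
  shows "u \<in> chain_vertices m s" and "v \<in> chain_vertices m s" and "u \<noteq> v"
  using assms by (cases u; cases v; force simp: staircase_def chain_vertices_def)+

lemma simple_graph_chain:
  assumes "staircase m s"
  shows "simple_graph (chain_vertices m s) (chain_edges m s)"
  unfolding simple_graph_def
proof (intro conjI ballI)
  show "finite (chain_vertices m s)" by (simp add: chain_vertices_def)
  fix e assume "e \<in> chain_edges m s"
  then obtain u v where "e = {u, v}" "chain_adj m s u v" unfolding chain_edges_def by blast
  then show "e \<subseteq> chain_vertices m s" "card e = 2"
    using chain_adj_vertices[OF assms] by auto
qed

lemma card_chain_vertices: "card (chain_vertices m s) = (\<Sum>i<m. s i)"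
  by (simp add: chain_vertices_def card_SigmaI)

lemma degree_chain_eq_card:
  assumes "staircase m s"
  shows "degree (chain_edges m s) u = card {v. chain_adj m s u v}"
proof -
  have "{v \<in> chain_vertices m s. {u, v} \<in> chain_edges m s} = {v. chain_adj m s u v}"
    using chain_adj_vertices[OF assms, of u] by (auto simp: chain_edges_iff)
  then show ?thesis by (simp add: degree_eq_card_neighbours[OF simple_graph_chain[OF assms]])
qed

lemma degree_chain:
  assumes "staircase m s" and "i < m" and "p < s i"
  shows "degree (chain_edges m s) (i, p)
    = s i - 1 - (if (i, p) \<in> {(0, 0), (m - 1, s (m - 1) - 1)} then 1 else 0)"
proof -
  have si: "3 \<le> s i" using assms by (simp add: staircase_def)
  have block_card: "card (Pair i ` {1..<s i - 1}) = s i - 2" by (simp add: card_image inj_on_def)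
  consider "p = 0" | "p = s i - 1" | "0 < p \<and> p < s i - 1" using assms(3) si by linarith
  then have "card {v. chain_adj m s (i, p) v}
      = s i - 1 - (if (i, p) \<in> {(0, 0), (m - 1, s (m - 1) - 1)} then 1 else 0)"
  proof cases
    case 1
    have "{v. chain_adj m s (i, p) v}
        = Pair i ` {1..<s i - 1} \<union> (if 0 < i then {(i - 1, s (i - 1) - 1)} else {})"
      using 1 si assms(2) by (auto simp: image_iff doubleton_eq_iff split: if_splits)
    moreover have "card \<dots> = s i - 2 + (if 0 < i then 1 else 0)"
      using block_card by (subst card_Un_disjoint) auto
    ultimately show ?thesis using 1 si by auto
  next
    case 2
    have "{v. chain_adj m s (i, p) v}
        = Pair i ` {1..<s i - 1} \<union> (if Suc i < m then {(Suc i, 0)} else {})"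
      using 2 si assms(2) by (auto simp: image_iff doubleton_eq_iff split: if_splits)
    moreover have "card \<dots> = s i - 2 + (if Suc i < m then 1 else 0)"
      using block_card by (subst card_Un_disjoint) auto
    ultimately show ?thesis using 2 si assms(2) by (auto simp: numeral_2_eq_2)
  next
    case 3
    have "{v. chain_adj m s (i, p) v} = Pair i ` ({..<s i} - {p})"
      using 3 si assms(2) by (auto simp: image_iff doubleton_eq_iff)
    moreover have "card \<dots> = s i - 1" using assms(3) by (simp add: card_image inj_on_def)
    ultimately show ?thesis using 3 by auto
  qed
  then show ?thesis by (simp add: degree_chain_eq_card[OF assms(1)])
qed

lemma chain_block_reachable:
  assumes "staircase m s" and "i < m" and "q0 < s i" and "q < s i"
  shows "((i, q0), (i, q)) \<in> (adj_rel (chain_edges m s))\<^sup>*"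
proof -
  let ?R = "adj_rel (chain_edges m s)"
  have "3 \<le> s i" using assms(1,2) by (simp add: staircase_def)
  \<comment> \<open>Every vertex of the block is adjacent to \<open>(i, 1)\<close>, as \<open>1 \<noteq> s i - 1\<close>.\<close>
  have to1: "((i, q'), (i, 1)) \<in> ?R\<^sup>*" if "q' < s i" for q'
  proof (cases "q' = 1")
    case False
    then have "chain_adj m s (i, q') (i, 1)"
      using that assms(2) \<open>3 \<le> s i\<close> by (auto simp: doubleton_eq_iff)
    then show ?thesis by (simp add: adj_rel_def chain_edges_iff r_into_rtrancl)
  qed simp
  have "((i, 1), (i, q)) \<in> ?R\<^sup>*"
    using symD[OF sym_rtrancl[OF sym_adj_rel] to1[OF assms(4)]] .
  with to1[OF assms(3)] show ?thesis by (rule rtrancl_trans)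
qed

lemma connected_graph_chain:
  assumes "staircase m s" and "0 < m"
  shows "connected_graph (chain_vertices m s) (chain_edges m s)"
proof -
  let ?R = "adj_rel (chain_edges m s)"
  have s3: "3 \<le> s i" if "i < m" for i using assms(1) that by (simp add: staircase_def)
  have reach: "((0, 0), (i, p)) \<in> ?R\<^sup>*" if "i < m" "p < s i" for i p
    using that
  proof (induction i arbitrary: p)
    case 0
    then show ?case using chain_block_reachable[OF assms(1), of 0 0 p] s3[of 0] by simp
  next
    case (Suc i)
    then have "((0, 0), (i, s i - 1)) \<in> ?R\<^sup>*" using s3[of i] by simp
    moreover have "((i, s i - 1), (Suc i, 0)) \<in> ?R"
      using Suc.prems by (simp add: adj_rel_def chain_edges_iff)
    moreover have "((Suc i, 0), (Suc i, p)) \<in> ?R\<^sup>*"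
      using chain_block_reachable[OF assms(1) Suc.prems(1), of 0 p] Suc.prems s3[of "Suc i"] by simp
    ultimately show ?case by (meson rtrancl_into_rtrancl rtrancl_trans)
  qed
  show ?thesis unfolding connected_graph_def
  proof (intro conjI ballI simple_graph_chain[OF assms(1)])
    have "(0, 0) \<in> chain_vertices m s" using assms s3[of 0] by (simp add: chain_vertices_def)
    then show "chain_vertices m s \<noteq> {}" by blast
    fix u v assume "u \<in> chain_vertices m s" "v \<in> chain_vertices m s"
    then have "((0, 0), u) \<in> ?R\<^sup>*" "((0, 0), v) \<in> ?R\<^sup>*"
      using reach by (auto simp: chain_vertices_def)
    then have "(u, (0, 0)) \<in> ?R\<^sup>*" "((0, 0), v) \<in> ?R\<^sup>*"
      by (auto intro: symD[OF sym_rtrancl[OF sym_adj_rel]])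
    then show "(u, v) \<in> ?R\<^sup>*" by (rule rtrancl_trans)
  qed
qed

lemma chain_edge_degree_diff:
  assumes "staircase m s" and "chain_adj m s u v"
  defines "d \<equiv> degree (chain_edges m s)" and "ends \<equiv> {(0, 0), (m - 1, s (m - 1) - 1)}"
  shows "(real (d u) - real (d v))^2 \<le> (if u \<in> ends \<or> v \<in> ends
    \<or> (\<exists>i. i < m - 1 \<and> s i \<noteq> s (Suc i) \<and> {u, v} = {(i, s i - 1), (Suc i, 0)}) then 1 else 0)"
proof -
  obtain i p j q where u: "u = (i, p)" and v: "v = (j, q)" by (cases u, cases v)
  have uv: "i < m" "p < s i" "j < m" "q < s j"
    using chain_adj_vertices[OF assms(1,2)] by (auto simp: u v chain_vertices_def)
  have s3: "3 \<le> s k" if "k < m" for k using assms(1) that by (simp add: staircase_def)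
  have du: "d u = s i - 1 - (if u \<in> ends then 1 else 0)"
    and dv: "d v = s j - 1 - (if v \<in> ends then 1 else 0)"
    using degree_chain[OF assms(1)] uv by (simp_all add: u v d_def ends_def)
  consider (block) "i = j"
    | (link) k where "{u, v} = {(k, s k - 1), (Suc k, 0)}" "Suc k < m"
    using assms(2) by (auto simp: u v)
  then show ?thesis
  proof cases
    case block
    then have "(real (d u) - real (d v))^2 \<le> 1"
      using du dv s3[OF uv(1)] by (intro power2_diff_le_1) auto
    moreover have "d u = d v" if "u \<notin> ends" "v \<notin> ends" using du dv block that by simp
    ultimately show ?thesis by auto
  next
    case (link k)
    have "(k, s k - 1) \<notin> ends" "(Suc k, 0) \<notin> ends"
      using link s3[of k] s3[of "Suc k"] by (auto simp: ends_def)
    then have "d (k, s k - 1) = s k - 1" "d (Suc k, 0) = s (Suc k) - 1"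
      using degree_chain[OF assms(1), of k "s k - 1"] degree_chain[OF assms(1), of "Suc k" 0]
        link(2) s3[of k] s3[of "Suc k"]
      by (simp_all add: d_def ends_def del: insert_iff)
    then have "(real (d u) - real (d v))^2 = (real (s k - 1) - real (s (Suc k) - 1))^2"
      using link(1) by (auto simp: doubleton_eq_iff power2_commute)
    moreover have "s k \<le> s (Suc k)" "s (Suc k) \<le> Suc (s k)"
      using assms(1) link(2) by (simp_all add: staircase_def)
    then have "(real (s k - 1) - real (s (Suc k) - 1))^2 \<le> 1"
      using s3[of k] by (intro power2_diff_le_1) auto
    moreover have "\<exists>i. i < m - 1 \<and> s i \<noteq> s (Suc i) \<and> {u, v} = {(i, s i - 1), (Suc i, 0)}"
      if "s k \<noteq> s (Suc k)"
      using link that by (intro exI[of _ k]) auto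
    ultimately show ?thesis by (cases "s k = s (Suc k)") auto
  qed
qed

lemma sigma_chain_le:
  assumes "staircase m s" and "0 < m"
  shows "sigma (chain_vertices m s) (chain_edges m s) \<le> 2 * real (s (m - 1))"
proof -
  define E where "E = chain_edges m s"
  define z where "z = (m - 1, s (m - 1) - 1)"
  define I where "I = {i. i < m - 1 \<and> s i \<noteq> s (Suc i)}"
  define F where "F = {e \<in> E. (0, 0) \<in> e} \<union> {e \<in> E. z \<in> e} \<union> (\<lambda>i. {(i, s i - 1), (Suc i, 0)}) ` I"
  have s3: "3 \<le> s i" if "i < m" for i using assms(1) that by (simp add: staircase_def)
  have "F \<subseteq> E" using s3 by (auto simp: F_def I_def E_def chain_edges_iff)
  have "sigma (chain_vertices m s) E \<le> card F"
  proof (rule sigma_le_card_edges[OF simple_graph_chain[OF assms(1), folded E_def] \<open>F \<subseteq> E\<close>])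
    fix u v assume "{u, v} \<in> E"
    then have adj: "chain_adj m s u v" by (simp add: E_def chain_edges_iff)
    show "(real (degree E u) - real (degree E v))^2 \<le> (if {u, v} \<in> F then 1 else 0)"
      using chain_edge_degree_diff[OF assms(1) adj, folded E_def] \<open>{u, v} \<in> E\<close>
      by (auto simp: F_def I_def z_def split: if_split_asm)
  qed
  also have "card F \<le> degree E (0, 0) + degree E z + card I"
  proof -
    have "card F \<le> card {e \<in> E. (0, 0) \<in> e} + card {e \<in> E. z \<in> e} + card I"
      unfolding F_def
      by (intro order_trans[OF card_Un_le] add_mono order_trans[OF card_Un_le] card_image_le)
        (simp_all add: I_def)
    then show ?thesis by (simp add: degree_def)
  qed
  also have "\<dots> \<le> 2 * s (m - 1)"
  proof -
    have "degree E (0, 0) \<le> s 0 - 1" "degree E z \<le> s (m - 1) - 1"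
      using degree_chain[OF assms(1), of 0 0] degree_chain[OF assms(1), of "m - 1" "s (m - 1) - 1"]
        assms(2) s3[of 0] s3[of "m - 1"]
      by (simp_all add: E_def z_def diff_le_mono2)
    moreover have "card I + s 0 \<le> s (m - 1)"
      using card_steps_le[of "m - 1" s] assms(1) by (simp add: I_def staircase_def)
    ultimately show ?thesis by linarith
  qed
  finally show ?thesis by (simp add: E_def)
qed

lemma sigma_t_chain_ge:
  assumes "staircase m s" and "4 \<le> K"
  shows "real (3 * card {i. i < m \<and> s i = 3}) * real (K * card {i. i < m \<and> s i = K})
      * (real K - 4)^2 / 2 \<le> sigma_t (chain_vertices m s) (chain_edges m s)"
proof -
  define d where "d u = real (degree (chain_edges m s) u)" for u
  define Lo where "Lo = (SIGMA i:{i. i < m \<and> s i = 3}. {..<s i})"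
  define Hi where "Hi = (SIGMA i:{i. i < m \<and> s i = K}. {..<s i})"
  have "card Lo = 3 * card {i. i < m \<and> s i = 3}" "card Hi = K * card {i. i < m \<and> s i = K}"
    by (simp_all add: Lo_def Hi_def card_SigmaI)
  moreover have "real (card Lo) * real (card Hi) * (real K - 4)^2
      \<le> (\<Sum>u\<in>chain_vertices m s. \<Sum>v\<in>chain_vertices m s. (d u - d v)^2)"
  proof (rule sum_sq_diff_ge_card_mul)
    show "finite (chain_vertices m s)" by (simp add: chain_vertices_def)
    show "Lo \<subseteq> chain_vertices m s" "Hi \<subseteq> chain_vertices m s"
      by (auto simp: Lo_def Hi_def chain_vertices_def)
    show "0 \<le> real K - 4" using assms(2) by simp
    fix u v assume "u \<in> Lo" "v \<in> Hi"
    then have "d u \<le> 2" "real K - 2 \<le> d v"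
      using degree_chain[OF assms(1)] assms(2) by (auto simp: Lo_def Hi_def d_def)
    then show "real K - 4 \<le> d v - d u" by simp
  qed
  ultimately show ?thesis by (simp add: sigma_t_def d_def mult_ac)
qed

lemma chain_ratio_ge:
  assumes "staircase m s" and "0 < m" and "4 \<le> s (m - 1)"
  defines "K \<equiv> s (m - 1)"
  shows "real (card {i. i < m \<and> s i = 3}) * real (card {i. i < m \<and> s i = K})
      * 3 * (real K - 4)^2 / 4
    \<le> sigma_t (chain_vertices m s) (chain_edges m s) / sigma (chain_vertices m s) (chain_edges m s)"
proof -
  have K: "0 < real K" using assms(3) by (simp add: K_def)
  have "real (card {i. i < m \<and> s i = 3}) * real (card {i. i < m \<and> s i = K})
        * 3 * (real K - 4)^2 / 4
      = real (3 * card {i. i < m \<and> s i = 3}) * real (K * card {i. i < m \<and> s i = K})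
        * (real K - 4)^2 / 2 / (2 * real K)"
    using K by (simp add: field_simps)
  also have "\<dots> \<le> sigma_t (chain_vertices m s) (chain_edges m s) / (2 * real K)"
    using sigma_t_chain_ge[OF assms(1)] assms(3) K by (intro divide_right_mono) (auto simp: K_def)
  also have "\<dots> \<le> sigma_t (chain_vertices m s) (chain_edges m s)
      / sigma (chain_vertices m s) (chain_edges m s)"
    using sigma_t_div_le_ratio[OF connected_graph_chain[OF assms(1,2)]
        sigma_chain_le[OF assms(1,2)]]
    by (simp add: K_def)
  finally show ?thesis .
qed

lemma complete_graph_minus_edge:
  assumes "3 \<le> n"
  shows "connected_graph (chain_vertices 1 (\<lambda>_. n)) (chain_edges 1 (\<lambda>_. n))"
    and "\<not> regular_graph (chain_vertices 1 (\<lambda>_. n)) (chain_edges 1 (\<lambda>_. n))"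
    and "card (chain_vertices 1 (\<lambda>_. n)) = n"
proof -
  have stair: "staircase 1 (\<lambda>_. n)" using assms by (simp add: staircase_def)
  then show "connected_graph (chain_vertices 1 (\<lambda>_. n)) (chain_edges 1 (\<lambda>_. n))"
    by (rule connected_graph_chain) simp
  have "degree (chain_edges 1 (\<lambda>_. n)) (0, 0) \<noteq> degree (chain_edges 1 (\<lambda>_. n)) (0, 1)"
    using degree_chain[OF stair, of 0 0] degree_chain[OF stair, of 0 1] assms by simp arith
  moreover have "(0, 0) \<in> chain_vertices 1 (\<lambda>_. n)" "(0, 1) \<in> chain_vertices 1 (\<lambda>_. n)"
    using assms by (auto simp: chain_vertices_def)
  ultimately show "\<not> regular_graph (chain_vertices 1 (\<lambda>_. n)) (chain_edges 1 (\<lambda>_. n))"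
    unfolding regular_graph_def by blast
  show "card (chain_vertices 1 (\<lambda>_. n)) = n" by (simp add: card_chain_vertices)
qed

section \<open>The lower bound\<close>

definition staircase_profile :: "nat \<Rightarrow> nat \<Rightarrow> nat \<Rightarrow> nat \<Rightarrow> nat" where
  "staircase_profile a b K i =
     (if i < a then 3 else if i < a + b then 4
      else if i < a + b + (K - 4) then i - (a + b) + 4 else K)"

lemma staircase_profile_facts:
  fixes a b K c :: nat
  assumes "4 \<le> K" and "1 \<le> c"
  defines "s \<equiv> staircase_profile a b K" and "m \<equiv> a + b + (K - 4) + c"
  shows "staircase m s" and "0 < m" and "s (m - 1) = K"
    and "(\<Sum>i<m. s i) = 3 * a + 4 * b + (\<Sum>i<K - 4. i + 4) + c * K"
    and "a \<le> card {i. i < m \<and> s i = 3}" and "c \<le> card {i. i < m \<and> s i = K}"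
proof -
  show "staircase m s" using assms by (auto simp: staircase_def staircase_profile_def)
  show "0 < m" "s (m - 1) = K" using assms by (auto simp: staircase_profile_def)
  have "(\<Sum>i<m. s i) = (\<Sum>i<a. s i) + (\<Sum>i<b. s (a + i)) + (\<Sum>i<K - 4. s (a + b + i))
      + (\<Sum>i<c. s (a + b + (K - 4) + i))"
    unfolding m_def sum_lessThan_add by (simp add: add.assoc)
  also have "(\<Sum>i<a. s i) = 3 * a" by (simp add: s_def staircase_profile_def)
  also have "(\<Sum>i<b. s (a + i)) = 4 * b" by (simp add: s_def staircase_profile_def)
  also have "(\<Sum>i<K - 4. s (a + b + i)) = (\<Sum>i<K - 4. i + 4)"
    by (intro sum.cong) (auto simp: s_def staircase_profile_def)
  also have "(\<Sum>i<c. s (a + b + (K - 4) + i)) = c * K" by (simp add: s_def staircase_profile_def)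
  finally show "(\<Sum>i<m. s i) = 3 * a + 4 * b + (\<Sum>i<K - 4. i + 4) + c * K" .
  have "{..<a} \<subseteq> {i. i < m \<and> s i = 3}" by (auto simp: s_def m_def staircase_profile_def)
  then show "a \<le> card {i. i < m \<and> s i = 3}" using card_mono[of _ "{..<a}"] by fastforce
  have "{a + b + (K - 4)..<m} \<subseteq> {i. i < m \<and> s i = K}"
    by (auto simp: s_def m_def staircase_profile_def)
  then show "c \<le> card {i. i < m \<and> s i = K}" using card_mono[of _ "{a + b + (K - 4)..<m}"]
    by (fastforce simp: m_def)
qed

lemma sqrt_scale_parameters:
  fixes n :: nat
  assumes "1600 \<le> n"
  obtains K c :: nat where "6 \<le> K" and "4 * (K * K) \<le> n" and "3 * K * c \<le> n"
    and "sqrt n / 4 \<le> real K - 4" and "sqrt n / 3 \<le> real c"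
proof -
  define x where "x = sqrt (real n)"
  have x40: "40 \<le> x" unfolding x_def using assms by (simp add: real_le_rsqrt)
  have xx: "x * x = real n" unfolding x_def by simp
  define K where "K = nat \<lfloor>x / 2\<rfloor>"
  have K_le: "real K \<le> x / 2" and K_gt: "x / 2 - 1 < real K"
    using x40 by (simp_all add: K_def) linarith
  have K6: "6 \<le> K" using K_gt x40 by linarith
  have "real K * real K \<le> (x / 2) * (x / 2)" using K_le by (intro mult_mono) auto
  then have "real (4 * (K * K)) \<le> real n" using xx by simp
  then have KK: "4 * (K * K) \<le> n" by (simp only: of_nat_le_iff)
  define c where "c = n div (3 * K)"
  have "3 * K * c \<le> n" by (simp add: c_def)
  have "n = 3 * K * c + n mod (3 * K)" by (simp add: c_def)
  moreover have "n mod (3 * K) < 3 * K" using K6 by simp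
  ultimately have "n < 3 * K * (c + 1)" by (simp add: algebra_simps)
  then have "real n < real (3 * K * (c + 1))" by (simp only: of_nat_less_iff)
  then have "x * x < 3 * real K * (real c + 1)" using xx by (simp add: algebra_simps)
  also have "\<dots> \<le> 3 * (x / 2) * (real c + 1)" using K_le by (intro mult_right_mono) auto
  finally have "x * x < x * (3 / 2 * (real c + 1))" by (simp add: algebra_simps)
  then have "x < 3 / 2 * (real c + 1)" using x40 by (simp only: mult_less_cancel_left)
  then have "x < 3 / 2 * real c + 3 / 2" by (simp add: algebra_simps)
  then have "x / 3 \<le> real c" using x40 by linarith
  moreover have "x / 4 \<le> real K - 4" using K_gt x40 by linarith
  ultimately show ?thesis using that K6 KK \<open>3 * K * c \<le> n\<close> by (simp add: x_def)
qed

lemma lower_bound_parameters: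
  fixes n :: nat
  assumes "1600 \<le> n"
  obtains a b K c :: nat where "4 \<le> K" and "1 \<le> c"
    and "3 * a + 4 * b + (\<Sum>i<K - 4. i + 4) + c * K = n"
    and "real n powr (5/2) / 768 \<le> real a * real c * 3 * (real K - 4)^2 / 4"
proof -
  obtain K c where K6: "6 \<le> K" and KK: "4 * (K * K) \<le> n" and Kc: "3 * K * c \<le> n"
    and K: "sqrt n / 4 \<le> real K - 4" and c: "sqrt n / 3 \<le> real c"
    using sqrt_scale_parameters[OF assms] .
  have x40: "40 \<le> sqrt n" using assms by (simp add: real_le_rsqrt)
  define T where "T = (\<Sum>i<K - 4. i + 4)"
  have "T \<le> (\<Sum>i<K - 4. K)" unfolding T_def by (intro sum_mono) auto
  also have "\<dots> \<le> K * K" by (simp add: mult_le_mono1)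
  finally have "T \<le> K * K" .
  define R where "R = n - T - c * K"
  have R: "5 * n \<le> 12 * R" using KK Kc \<open>T \<le> K * K\<close> by (simp add: R_def algebra_simps)
  \<comment> \<open>The blocks of sizes 3 and 4 absorb the remainder: \<open>R = 3 a + 4 b\<close> with \<open>b \<le> 2\<close>.\<close>
  define b where "b = R mod 3"
  define a where "a = R div 3 - b"
  have "b \<le> 2" by (simp add: b_def)
  have "R = 3 * (R div 3) + R mod 3" by simp
  moreover have "R mod 3 \<le> R div 3" using R assms by linarith
  ultimately have R_ab: "3 * a + 4 * b = R" unfolding a_def b_def by linarith
  have "3 * (c * K) \<le> n" using Kc by (simp add: mult_ac)
  then have "T + c * K \<le> n" using KK \<open>T \<le> K * K\<close> by linarith
  then have n: "3 * a + 4 * b + T + c * K = n" using R_ab by (simp add: R_def)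
  have a: "real n / 4 \<le> 3 * real a" using R R_ab \<open>b \<le> 2\<close> assms by linarith
  have "1 \<le> c" using c x40 by linarith
  have "real n powr (5/2) / 768 = real n / 4 * (sqrt n / 3) * (sqrt n / 4)^2 / 4"
    by (simp add: powr_five_halves power2_eq_square)
  also have "\<dots> \<le> 3 * real a * real c * (real K - 4)^2 / 4"
    using a c K x40 by (intro divide_right_mono mult_mono power_mono) auto
  finally have "real n powr (5/2) / 768 \<le> real a * real c * 3 * (real K - 4)^2 / 4"
    by (simp add: mult_ac)
  then show ?thesis using K6 \<open>1 \<le> c\<close> n unfolding T_def by (intro that) simp_all
qed

lemma lower_bound_graph:
  fixes n :: nat
  assumes "1600 \<le> n"
  obtains V :: "(nat \<times> nat) set" and E where "connected_graph V E" and "\<not> regular_graph V E"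
    and "card V = n" and "real n powr (5/2) / 768 \<le> sigma_t V E / sigma V E"
proof -
  obtain a b K c where K: "4 \<le> K" and c: "1 \<le> c"
    and n: "3 * a + 4 * b + (\<Sum>i<K - 4. i + 4) + c * K = n"
    and bound: "real n powr (5/2) / 768 \<le> real a * real c * 3 * (real K - 4)^2 / 4"
    using lower_bound_parameters[OF assms] .
  define s where "s = staircase_profile a b K"
  define m where "m = a + b + (K - 4) + c"
  note profile = staircase_profile_facts[OF K c, of a b, folded s_def m_def]
  let ?V = "chain_vertices m s" and ?E = "chain_edges m s"
  have "real a * real c * 3 * (real K - 4)^2 / 4
      \<le> real (card {i. i < m \<and> s i = 3}) * real (card {i. i < m \<and> s i = K})
        * 3 * (real K - 4)^2 / 4"
    using profile(5,6) by (intro divide_right_mono mult_mono) auto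
  also have "\<dots> \<le> sigma_t ?V ?E / sigma ?V ?E"
    using chain_ratio_ge[OF profile(1,2)] profile(3) K by simp
  finally have ratio: "real n powr (5/2) / 768 \<le> sigma_t ?V ?E / sigma ?V ?E"
    using bound by linarith
  moreover have "\<not> regular_graph ?V ?E"
    using ratio sigma_t_regular[of ?V ?E] assms by (auto simp: powr_gt_zero)
  moreover have "card ?V = n" using profile(4) n by (simp add: card_chain_vertices)
  ultimately show ?thesis using that connected_graph_chain[OF profile(1,2)] by blast
qed

theorem theorem3:
  shows "(\<forall>n::nat. n \<ge> 3 \<longrightarrow> f_max n \<le> sqrt 1.5 * real n powr (5/2))
    \<and> (\<exists>c>0. \<exists>N. \<forall>n::nat. n \<ge> N \<longrightarrow> f_max n \<ge> c * real n powr (5/2))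
    \<and> (\<forall>(V::'a set) E. connected_graph V E \<longrightarrow>
          sigma_t V E \<le> sqrt 1.5 * real (card V) powr (5/2) * sigma V E)"
proof (intro conjI allI impI)
  fix n :: nat assume "3 \<le> n"
  note K_n = complete_graph_minus_edge[OF this]
  have "f_max (card (chain_vertices 1 (\<lambda>_. n)))
      \<le> sqrt 1.5 * real (card (chain_vertices 1 (\<lambda>_. n))) powr (5/2)"
    using ratio_le_sqrt_bound by (intro f_max_le[OF K_n(1,2)]) fastforce
  then show "f_max n \<le> sqrt 1.5 * real n powr (5/2)" using K_n(3) by simp
next
  show "\<exists>c>0. \<exists>N. \<forall>n::nat. n \<ge> N \<longrightarrow> f_max n \<ge> c * real n powr (5/2)"
  proof (intro exI[of _ "1 / 768"] exI[of _ 1600] conjI allI impI)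
    fix n :: nat assume "1600 \<le> n"
    then obtain V :: "(nat \<times> nat) set" and E where "connected_graph V E" "\<not> regular_graph V E"
      "card V = n" and bound: "real n powr (5/2) / 768 \<le> sigma_t V E / sigma V E"
      by (rule lower_bound_graph)
    then have "sigma_t V E / sigma V E \<le> f_max n" using ratio_le_f_max by metis
    then show "1 / 768 * real n powr (5/2) \<le> f_max n" using bound by linarith
  qed simp
qed (use sigma_t_le_sigma in blast)

end
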